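(* Let $f:\mathbb{R}^n\to\mathbb{R}$, $\bar x\in\mathbb{R}^n$, $a\in\mathbb{R}$, $\Delta>0$, let $I$ be a finite index set, and for $i\in I$ let $y_i\in\mathbb{R}^n$ and $s_i\in\partial f(y_i)$. For $w\in\mathbb{R}^n$ put $$h(w;\bar x,a,y_i)=f(y_i)+\tfrac a2\|y_i-\bar x\|_2^2+\langle s_i+a(y_i-\bar x),w-y_i\rangle,\qquad m(w)=\max_{i\in I}h(w;\bar x,a,y_i),$$ and $E_i=f(\bar x)-h(\bar x;\bar x,a,y_i)$ for $i\in I$. Assume there is $\bar i\in I$ with $y_{\bar i}=\bar x$ and that $E_i\ge0$ for all $i\in I$. Let $(x^*,z^* )$ be an optimal solution of the linear program $$\min_{(x,z)\in\mathbb{R}^{n+1}} z\quad\text{s.t.}\quad h(x;\bar x,a,y_i)\le z\ (i\in I),\qquad \|x-\bar x\|_\infty\le\Delta,$$ let $\bar I=\{i\in I: h(x^*;\bar x,a,y_i)=z^*\}$ be the set of active cutting-plane constraints, and let $\lambda_i$, $i\in\bar I$, be the Lagrange multipliers of these active constraints in a Karush–Kuhn–Tucker system for this linear program at $(x^*,z^* )$. (i) Then $$m(\bar x)-m(x^* )=f(\bar x)-z^*=\begin{cases}\sum_{i\in\bar I}\lambda_iE_i, & \text{if }\|x^*-\bar x\|_\infty<\Delta,\\[2pt] \sum_{i\in\bar I}\lambda_iE_i+\Delta\Big\|\sum_{i\in\bar I}\lambda_i[s_i+a(y_i-\bar x)]\Big\|_1, & \text{if }\|x^*-\bar x\|_\infty=\Delta.\end{cases}$$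 (ii) Let $C\subseteq\mathbb{R}^n$ be any set with $\bar x\in\mathrm{int}\,C$ and $y_i\in\mathrm{int}\,C$ for all $i\in\bar I$, and suppose additionally that $a$ is such that, with $g(y;x,a)=f(y)+\frac a2\|y-x\|_2^2$, for every $x\in\mathbb{R}^n$ the function $g(\cdot;x,a)$ is the restriction to $C$ of a convex function $H(\cdot;x,a):\mathbb{R}^n\to\mathbb{R}$ satisfying $g(y;x,a)\ge H(y;x,a)$ for all $y\in\mathbb{R}^n$. Then $$\sum_{i\in\bar I}\lambda_i[s_i+a(y_i-\bar x)]\in\partial_{\tilde\epsilon}g(\bar x;\bar x,a),\qquad \tilde\epsilon=\sum_{i\in\bar I}\lambda_iE_i;$$ and furthermore, if $0\in\partial_0 g(\bar x;\bar x,a)$, then $\bar x$ is a global minimizer of $g(\cdot;\bar x,a)$ on $\mathbb{R}^n$.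
   Context: $\partial f$ denotes the basic (limiting) subdifferential. $\|\cdot\|_1,\|\cdot\|_2,\|\cdot\|_\infty$ are the one, two and infinity norms. For a point $y\in\mathrm{int}\,C$, the $\epsilon$-subdifferential of $g(\cdot;\bar x,a)$ is defined as that of the convex function $H(\cdot;\bar x,a)$: $\partial_\epsilon g(y;\bar x,a):=\{v\in\mathbb{R}^n: H(z;\bar x,a)\ge H(y;\bar x,a)+\langle v,z-y\rangle-\epsilon\ \forall z\in\mathbb{R}^n\}$. *)

theory Defs
  imports "HOL-Analysis.Analysis"
begin

text \<open>Vectors of R^n are modelled as real^'n. The infinity norm is the library's infnorm.\<close>

definition norm1 :: "real ^ 'n \<Rightarrow> real" where
  "norm1 x = (\<Sum>j\<in>UNIV. \<bar>x $ j\<bar>)"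

definition frechet_subdiff :: "(real ^ 'n \<Rightarrow> real) \<Rightarrow> real ^ 'n \<Rightarrow> (real ^ 'n) set" where
  "frechet_subdiff f x = {v. \<forall>e>0. \<exists>d>0. \<forall>y. norm (y - x) < d \<longrightarrow>
       f y \<ge> f x + inner v (y - x) - e * norm (y - x)}"

definition limiting_subdiff :: "(real ^ 'n \<Rightarrow> real) \<Rightarrow> real ^ 'n \<Rightarrow> (real ^ 'n) set" where
  "limiting_subdiff f x = {v. \<exists>xk vk. xk \<longlonglongrightarrow> x \<and> (\<lambda>k. f (xk k)) \<longlonglongrightarrow> f x \<and>
       vk \<longlonglongrightarrow> v \<and> (\<forall>k. vk k \<in> frechet_subdiff f (xk k))}"

definition eps_subdiff :: "(real ^ 'n \<Rightarrow> real) \<Rightarrow> real \<Rightarrow> real ^ 'n \<Rightarrow> (real ^ 'n) set" where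
  "eps_subdiff H eps y = {v. \<forall>z. H z \<ge> H y + inner v (z - y) - eps}"

definition hcut :: "(real ^ 'n \<Rightarrow> real) \<Rightarrow> real ^ 'n \<Rightarrow> real \<Rightarrow> real ^ 'n \<Rightarrow> real ^ 'n \<Rightarrow> real ^ 'n \<Rightarrow> real" where
  "hcut f xbar a y s w = f y + a / 2 * (norm (y - xbar))\<^sup>2 + inner (s + a *\<^sub>R (y - xbar)) (w - y)"

definition gprox :: "(real ^ 'n \<Rightarrow> real) \<Rightarrow> real ^ 'n \<Rightarrow> real \<Rightarrow> real ^ 'n \<Rightarrow> real" where
  "gprox f x a y = f y + a / 2 * (norm (y - x))\<^sup>2"

definition lp_feasible :: "'i set \<Rightarrow> ('i \<Rightarrow> real ^ 'n \<Rightarrow> real) \<Rightarrow> real ^ 'n \<Rightarrow> real \<Rightarrow> real ^ 'n \<Rightarrow> real \<Rightarrow> bool" where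
  "lp_feasible I h xbar Delta x z \<longleftrightarrow> (\<forall>i\<in>I. h i x \<le> z) \<and> infnorm (x - xbar) \<le> Delta"

text \<open>KKT system of the LP  min z  s.t.  h_i(x) - z \<le> 0 (i \<in> I),
  (x_j - xbar_j) - Delta \<le> 0, -(x_j - xbar_j) - Delta \<le> 0 (all j),
  at (x,z), with multipliers lam_i (cutting planes), mup_j, mum_j (box constraints).
  The gradient of h_i in x is g i.\<close>
definition lp_kkt :: "'i set \<Rightarrow> ('i \<Rightarrow> real ^ 'n \<Rightarrow> real) \<Rightarrow> ('i \<Rightarrow> real ^ 'n) \<Rightarrow> real ^ 'n \<Rightarrow> real
      \<Rightarrow> real ^ 'n \<Rightarrow> real \<Rightarrow> ('i \<Rightarrow> real) \<Rightarrow> real ^ 'n \<Rightarrow> real ^ 'n \<Rightarrow> bool" where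
  "lp_kkt I h g xbar Delta x z lam mup mum \<longleftrightarrow>
     lp_feasible I h xbar Delta x z \<and>
     (\<forall>i\<in>I. lam i \<ge> 0) \<and> (\<forall>j. mup $ j \<ge> 0 \<and> mum $ j \<ge> 0) \<and>
     1 - (\<Sum>i\<in>I. lam i) = 0 \<and>
     (\<Sum>i\<in>I. lam i *\<^sub>R g i) + mup - mum = 0 \<and>
     (\<forall>i\<in>I. lam i * (h i x - z) = 0) \<and>
     (\<forall>j. mup $ j * ((x - xbar) $ j - Delta) = 0) \<and>
     (\<forall>j. mum $ j * (- (x - xbar) $ j - Delta) = 0)"

end

theory Submission
  imports Defs
begin

(* Weighting the active cuts h_i(xbar) = f(xbar) - E_i by the multipliers lam_i, KKT
   stationarity sum lam_i g_i = mum - mup for the cut gradients g_i = s_i + a (y_i - xbar) turns f(xbar) - z* into sum lam_i E_i plus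
   <mum - mup, xbar - x*>, and box complementarity evaluates the latter as Delta |mum - mup|_1,
   which vanishes when the box is inactive.
   For (ii), each cut is a global affine minorant of the convex model H(.; xbar, a): the limiting
   subgradient s_i, shifted to g_i, is a Frechet subgradient of H near y_i, hence a
   global one by convexity, and this passes to the limit since H is continuous. So g_i is an
   E_i-subgradient of H at xbar, and a convex combination of eps-subgradients is a subgradient
   for the combined accuracy. *)

lemma frechet_subgradient_of_convex:
  fixes \<phi> :: "real ^ 'n \<Rightarrow> real"
  assumes conv: "convex_on UNIV \<phi>" and w: "w \<in> frechet_subdiff \<phi> x"
  shows "\<phi> x + inner w (z - x) \<le> \<phi> z"
proof -
  define n where "n = norm (z - x)"
  have "0 \<le> n" by (simp add: n_def)
  have approx: "\<phi> x + inner w (z - x) \<le> \<phi> z + e * n" if e: "e > 0" for e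
  proof -
    obtain d where d: "d > 0"
      and near: "\<And>u. norm (u - x) < d \<Longrightarrow> \<phi> x + inner w (u - x) - e * norm (u - x) \<le> \<phi> u"
      using w e unfolding frechet_subdiff_def by force
    define t where "t = min 1 (d / (2 * (n + 1)))"
    have t: "0 < t" "t \<le> 1" using d \<open>0 \<le> n\<close> by (auto simp: t_def)
    have "t * n \<le> d / (2 * (n + 1)) * (n + 1)"
      using t \<open>0 \<le> n\<close> by (intro mult_mono) (auto simp: t_def)
    also have "\<dots> = d / 2" using \<open>0 \<le> n\<close> by (simp add: field_simps)
    finally have tn: "t * n < d" using d by linarith
    have "\<phi> x + t * inner w (z - x) - e * (t * n) \<le> \<phi> (x + t *\<^sub>R (z - x))"
      using near[of "x + t *\<^sub>R (z - x)"] t tn by (simp add: n_def)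
    also have "\<dots> = \<phi> ((1 - t) *\<^sub>R x + t *\<^sub>R z)" by (simp add: algebra_simps)
    also have "\<dots> \<le> (1 - t) * \<phi> x + t * \<phi> z" using convex_onD[OF conv, of t x z] t by simp
    finally have "t * (\<phi> x + inner w (z - x)) \<le> t * (\<phi> z + e * n)" by (simp add: algebra_simps)
    then show ?thesis using t by simp
  qed
  show ?thesis
  proof (rule field_le_epsilon)
    fix e :: real assume "e > 0"
    then have "\<phi> x + inner w (z - x) \<le> \<phi> z + e / (n + 1) * n"
      using \<open>0 \<le> n\<close> by (intro approx) simp
    also have "e / (n + 1) * n \<le> e" using \<open>e > 0\<close> \<open>0 \<le> n\<close> by (simp add: field_simps)
    finally show "\<phi> x + inner w (z - x) \<le> \<phi> z + e" by simp
  qed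
qed

lemma frechet_subdiff_local:
  assumes "x \<in> interior C" and "\<And>u. u \<in> C \<Longrightarrow> F u = G u" and "v \<in> frechet_subdiff G x"
  shows "v \<in> frechet_subdiff F x"
  unfolding frechet_subdiff_def
proof (intro CollectI allI impI)
  fix e :: real assume "e > 0"
  obtain r where r: "r > 0" "ball x r \<subseteq> C" using assms(1) by (auto simp: mem_interior)
  obtain d where d: "d > 0"
    and near: "\<And>u. norm (u - x) < d \<Longrightarrow> G u \<ge> G x + inner v (u - x) - e * norm (u - x)"
    using assms(3) \<open>e > 0\<close> unfolding frechet_subdiff_def by force
  have inC: "u \<in> C" if "norm (u - x) < r" for u
    using that r by (auto simp: dist_norm norm_minus_commute)
  show "\<exists>d>0. \<forall>u. norm (u - x) < d \<longrightarrow> F u \<ge> F x + inner v (u - x) - e * norm (u - x)"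
    using d r near inC[of x] inC assms(2) by (intro exI[of _ "min d r"]) auto
qed

lemma frechet_subdiff_gprox:
  assumes v: "v \<in> frechet_subdiff f x"
  shows "v + a *\<^sub>R (x - c) \<in> frechet_subdiff (gprox f c a) x"
  unfolding frechet_subdiff_def
proof (intro CollectI allI impI)
  fix e :: real assume e: "e > 0"
  obtain d where d: "d > 0"
    and near: "\<And>u. norm (u - x) < d \<Longrightarrow> f u \<ge> f x + inner v (u - x) - e / 2 * norm (u - x)"
    using v half_gt_zero[OF e] unfolding frechet_subdiff_def mem_Collect_eq by blast
  define d' where "d' = min d (e / (\<bar>a\<bar> + 1))"
  have "gprox f c a u \<ge> gprox f c a x + inner (v + a *\<^sub>R (x - c)) (u - x) - e * norm (u - x)"
    if u: "norm (u - x) < d'" for u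
  proof -
    define n where "n = norm (u - x)"
    have n: "0 \<le> n" "n < d" "n * (\<bar>a\<bar> + 1) < e"
      using u by (auto simp: n_def d'_def pos_less_divide_eq)
    have "\<bar>a\<bar> * n * n \<le> e * n" using n by (intro mult_right_mono) (simp_all add: algebra_simps)
    moreover have "- a * (n * n) \<le> \<bar>a\<bar> * (n * n)" using n by (intro mult_right_mono) simp_all
    ultimately have quad: "- (e / 2 * n) \<le> a / 2 * n\<^sup>2" by (simp add: power2_eq_square)
    have "u - c = (x - c) + (u - x)" by simp
    then have sq: "(norm (u - c))\<^sup>2 = (norm (x - c))\<^sup>2 + 2 * inner (x - c) (u - x) + n\<^sup>2"
      unfolding n_def by (simp only: power2_norm_eq_inner inner_add_left inner_add_right inner_commute)
    have gu: "gprox f c a u = f u + a / 2 * (norm (x - c))\<^sup>2 + a * inner (x - c) (u - x) + a / 2 * n\<^sup>2"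
      unfolding gprox_def sq by (simp add: field_simps)
    moreover have "gprox f c a x = f x + a / 2 * (norm (x - c))\<^sup>2" by (simp add: gprox_def)
    moreover have "inner (v + a *\<^sub>R (x - c)) (u - x) = inner v (u - x) + a * inner (x - c) (u - x)"
      by (simp add: inner_add_left)
    ultimately show ?thesis using near[of u] n quad unfolding n_def by linarith
  qed
  then show "\<exists>d>0. \<forall>u. norm (u - x) < d \<longrightarrow>
      gprox f c a u \<ge> gprox f c a x + inner (v + a *\<^sub>R (x - c)) (u - x) - e * norm (u - x)"
    using d e by (intro exI[of _ d']) (auto simp: d'_def)
qed

lemma limiting_subgradient_convex_model:
  fixes f H :: "real ^ 'n \<Rightarrow> real"
  assumes conv: "convex_on UNIV H" and model: "\<And>u. u \<in> C \<Longrightarrow> H u = gprox f c a u"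
    and y: "y \<in> interior C" and s: "s \<in> limiting_subdiff f y"
  shows "H y + inner (s + a *\<^sub>R (y - c)) (z - y) \<le> H z"
proof -
  obtain xk vk where xk: "xk \<longlonglongrightarrow> y" and vk: "vk \<longlonglongrightarrow> s"
    and fr: "\<And>k. vk k \<in> frechet_subdiff f (xk k)"
    using s unfolding limiting_subdiff_def by blast
  have "isCont H y"
    using convex_on_continuous[OF open_UNIV conv] by (simp add: continuous_on_eq_continuous_at)
  then have "(\<lambda>k. H (xk k) + inner (vk k + a *\<^sub>R (xk k - c)) (z - xk k))
      \<longlonglongrightarrow> H y + inner (s + a *\<^sub>R (y - c)) (z - y)"
    by (intro tendsto_intros isCont_tendsto_compose[of y H] xk vk)
  moreover have "eventually (\<lambda>k. xk k \<in> interior C) sequentially"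
    using topological_tendstoD[OF xk open_interior y] .
  then have "eventually (\<lambda>k. H (xk k) + inner (vk k + a *\<^sub>R (xk k - c)) (z - xk k) \<le> H z) sequentially"
    by (rule eventually_mono)
      (use conv model fr in \<open>blast intro: frechet_subgradient_of_convex frechet_subdiff_local
         frechet_subdiff_gprox\<close>)
  ultimately show ?thesis by (rule tendsto_le[OF trivial_limit_sequentially tendsto_const])
qed

lemma hcut_shift: "hcut f c a y s w = hcut f c a y s p + inner (s + a *\<^sub>R (y - c)) (w - p)"
  by (simp add: hcut_def inner_diff_right)

lemma cutting_plane_eps_subgradient:
  fixes f H :: "real ^ 'n \<Rightarrow> real"
  assumes "convex_on UNIV H" and model: "\<And>u. u \<in> C \<Longrightarrow> H u = gprox f c a u"
    and y: "y \<in> interior C" and "s \<in> limiting_subdiff f y"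
  shows "s + a *\<^sub>R (y - c) \<in> eps_subdiff H (H c - hcut f c a y s c) c"
proof -
  have "H y = gprox f c a y" using model y interior_subset by blast
  then have below: "hcut f c a y s z \<le> H z" for z
    using limiting_subgradient_convex_model[OF assms, of z] by (simp add: hcut_def gprox_def)
  show ?thesis
    unfolding eps_subdiff_def
  proof (intro CollectI allI)
    fix z
    have "hcut f c a y s z = hcut f c a y s c + inner (s + a *\<^sub>R (y - c)) (z - c)"
      by (rule hcut_shift)
    then show "H c + inner (s + a *\<^sub>R (y - c)) (z - c) - (H c - hcut f c a y s c) \<le> H z"
      using below[of z] by simp
  qed
qed

lemma eps_subdiff_convex_combination:
  assumes "finite J" and lam: "\<And>i. i \<in> J \<Longrightarrow> 0 \<le> lam i" and lam_sum: "sum lam J = 1"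
    and sub: "\<And>i. i \<in> J \<Longrightarrow> g i \<in> eps_subdiff H (e i) x"
  shows "(\<Sum>i\<in>J. lam i *\<^sub>R g i) \<in> eps_subdiff H (\<Sum>i\<in>J. lam i * e i) x"
  unfolding eps_subdiff_def
proof (intro CollectI allI)
  fix z
  have "H x + inner (\<Sum>i\<in>J. lam i *\<^sub>R g i) (z - x) - (\<Sum>i\<in>J. lam i * e i)
      = (\<Sum>i\<in>J. lam i * (H x + inner (g i) (z - x) - e i))"
    using lam_sum by (simp add: inner_sum_left sum.distrib sum_subtractf algebra_simps
        flip: sum_distrib_left sum_distrib_right)
  also have "\<dots> \<le> (\<Sum>i\<in>J. lam i * H z)"
    using lam sub by (intro sum_mono mult_left_mono) (auto simp: eps_subdiff_def)
  also have "\<dots> = H z" using lam_sum by (simp flip: sum_distrib_right)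
  finally show "H z \<ge> H x + inner (\<Sum>i\<in>J. lam i *\<^sub>R g i) (z - x) - (\<Sum>i\<in>J. lam i * e i)" .
qed

lemma lp_optimal_value_eq_Max:
  assumes "finite I" "I \<noteq> {}" and feas: "lp_feasible I h xbar Delta x z"
    and opt: "\<forall>x' z'. lp_feasible I h xbar Delta x' z' \<longrightarrow> z \<le> z'"
  shows "Max ((\<lambda>i. h i x) ` I) = z"
proof (rule antisym)
  show "Max ((\<lambda>i. h i x) ` I) \<le> z" using assms by (simp add: lp_feasible_def)
  show "z \<le> Max ((\<lambda>i. h i x) ` I)"
    using assms by (intro opt[rule_format, of x]) (simp add: lp_feasible_def)
qed

lemma lp_kkt_gradient_sum:
  assumes "lp_kkt I h g xbar Delta x z lam mup mum"
  shows "(\<Sum>i\<in>I. lam i *\<^sub>R g i) = mum - mup"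
proof -
  have stationary: "(\<Sum>i\<in>I. lam i *\<^sub>R g i) + mup - mum = 0"
    using assms unfolding lp_kkt_def by auto
  have "(\<Sum>i\<in>I. lam i *\<^sub>R g i) = ((\<Sum>i\<in>I. lam i *\<^sub>R g i) + mup - mum) + (mum - mup)"
    by simp
  also have "\<dots> = mum - mup" using stationary by simp
  finally show ?thesis .
qed

lemma lp_kkt_sum_active:
  fixes F :: "'i \<Rightarrow> 'a::real_vector"
  assumes "finite I" and kkt: "lp_kkt I h g xbar Delta x z lam mup mum"
  shows "(\<Sum>i\<in>I. lam i *\<^sub>R F i) = (\<Sum>i\<in>{i\<in>I. h i x = z}. lam i *\<^sub>R F i)"
proof (rule sum.mono_neutral_right)
  have "\<forall>i\<in>I. lam i * (h i x - z) = 0" using kkt by (simp add: lp_kkt_def)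
  then show "\<forall>i\<in>I - {i \<in> I. h i x = z}. lam i *\<^sub>R F i = 0" by auto
qed (use \<open>finite I\<close> in auto)

lemma lp_kkt_active_weights:
  assumes "finite I" and kkt: "lp_kkt I h g xbar Delta x z lam mup mum"
  shows "sum lam {i\<in>I. h i x = z} = 1" and "\<And>i. i \<in> {i\<in>I. h i x = z} \<Longrightarrow> 0 \<le> lam i"
  using lp_kkt_sum_active[OF assms, of "\<lambda>_. 1 :: real"] kkt by (simp_all add: lp_kkt_def)

lemma lp_kkt_weighted_cuts:
  assumes kkt: "lp_kkt I h g xbar Delta x z lam mup mum"
    and affine: "\<And>i w. i \<in> I \<Longrightarrow> h i w = h i x + inner (g i) (w - x)"
  shows "(\<Sum>i\<in>I. lam i * h i w) = z + inner (mum - mup) (w - x)"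
proof -
  have lam_sum: "sum lam I = 1" and slack: "\<forall>i\<in>I. lam i * (h i x - z) = 0"
    using kkt unfolding lp_kkt_def by auto
  have "lam i * h i w = lam i * z + lam i * inner (g i) (w - x)" if i: "i \<in> I" for i
  proof -
    have "lam i * h i x = lam i * z" using slack i by (simp add: right_diff_distrib)
    then show ?thesis using affine[OF i, of w] by (simp add: distrib_left)
  qed
  then have "(\<Sum>i\<in>I. lam i * h i w) = (\<Sum>i\<in>I. lam i * z + lam i * inner (g i) (w - x))"
    by (rule sum.cong[OF refl])
  also have "\<dots> = (\<Sum>i\<in>I. lam i) * z + inner (\<Sum>i\<in>I. lam i *\<^sub>R g i) (w - x)"
    by (simp add: sum.distrib inner_sum_left sum_distrib_right)
  also have "\<dots> = z + inner (mum - mup) (w - x)" using lam_sum lp_kkt_gradient_sum[OF kkt] by simp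
  finally show ?thesis .
qed

lemma box_complementarity:
  fixes p q u c D :: real
  assumes "0 \<le> p" "0 \<le> q" "p * (u - c - D) = 0" "q * (c - u - D) = 0"
  shows "(q - p) * (c - u) = D * \<bar>q - p\<bar>"
proof (cases "p = 0")
  case True
  show ?thesis
  proof (cases "q = 0")
    case False
    then have "c - u = D" using assms(4) by simp
    then show ?thesis using True assms(2) by simp
  qed (simp add: True)
next
  case False
  then have "u - c = D" using assms(3) by simp
  then have "q = 0 \<or> D = 0" using assms(4) by auto
  then show ?thesis using \<open>u - c = D\<close> assms(1) by (auto simp: algebra_simps)
qed

lemma lp_kkt_box_term:
  assumes kkt: "lp_kkt I h g xbar Delta x z lam mup mum"
  shows "inner (mum - mup) (xbar - x) = Delta * norm1 (mum - mup)"
proof -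
  have "(mum $ j - mup $ j) * (xbar - x) $ j = Delta * \<bar>mum $ j - mup $ j\<bar>" for j
  proof -
    have "mup $ j \<ge> 0" "mum $ j \<ge> 0"
      "mup $ j * ((x - xbar) $ j - Delta) = 0" "mum $ j * (- (x - xbar) $ j - Delta) = 0"
      using kkt by (auto simp: lp_kkt_def)
    then show ?thesis using box_complementarity[of "mup $ j" "mum $ j" "x $ j" "xbar $ j" Delta] by simp
  qed
  then show ?thesis by (simp add: inner_vec_def norm1_def sum_distrib_left)
qed

lemma lp_kkt_box_interior:
  assumes kkt: "lp_kkt I h g xbar Delta x z lam mup mum" and "infnorm (x - xbar) < Delta"
  shows "mup = 0" "mum = 0"
proof -
  have "\<bar>(x - xbar) $ j\<bar> < Delta" for j
    using assms component_le_infnorm_cart[of "x - xbar" j] by linarith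
  moreover have "mup $ j * ((x - xbar) $ j - Delta) = 0" "mum $ j * (- (x - xbar) $ j - Delta) = 0" for j
    using kkt by (auto simp: lp_kkt_def)
  ultimately have "mup $ j = 0" "mum $ j = 0" for j by (auto simp: abs_less_iff)
  then show "mup = 0" "mum = 0" by (simp_all add: vec_eq_iff)
qed

lemma lp_kkt_value_gap:
  assumes "finite I" and kkt: "lp_kkt I h g xbar Delta x z lam mup mum"
    and affine: "\<And>i w. i \<in> I \<Longrightarrow> h i w = h i x + inner (g i) (w - x)"
  shows "c - z = (\<Sum>i\<in>{i\<in>I. h i x = z}. lam i * (c - h i xbar))
      + Delta * norm1 (\<Sum>i\<in>{i\<in>I. h i x = z}. lam i *\<^sub>R g i)"
proof -
  have "sum lam I = 1" using kkt by (simp add: lp_kkt_def)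
  then have "c - z = (\<Sum>i\<in>I. lam i * (c - h i xbar)) + ((\<Sum>i\<in>I. lam i * h i xbar) - z)"
    by (simp add: right_diff_distrib sum_subtractf flip: sum_distrib_right)
  also have "(\<Sum>i\<in>I. lam i * h i xbar) - z = Delta * norm1 (mum - mup)"
    using lp_kkt_weighted_cuts[OF kkt affine] lp_kkt_box_term[OF kkt] by simp
  finally show ?thesis
    using lp_kkt_sum_active[OF \<open>finite I\<close> kkt, of "\<lambda>i. c - h i xbar"]
      lp_kkt_sum_active[OF \<open>finite I\<close> kkt, of g] lp_kkt_gradient_sum[OF kkt] by simp
qed

lemma aggregate_cut_eps_subgradient:
  fixes f H :: "real ^ 'n \<Rightarrow> real"
  assumes conv: "convex_on UNIV H" and model: "\<And>u. u \<in> C \<Longrightarrow> H u = gprox f c a u"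
    and "c \<in> C" and "finite J" and "\<And>i. i \<in> J \<Longrightarrow> y i \<in> interior C"
    and "\<And>i. i \<in> J \<Longrightarrow> s i \<in> limiting_subdiff f (y i)"
    and "\<And>i. i \<in> J \<Longrightarrow> 0 \<le> lam i" and "sum lam J = 1"
  shows "(\<Sum>i\<in>J. lam i *\<^sub>R (s i + a *\<^sub>R (y i - c)))
      \<in> eps_subdiff H (\<Sum>i\<in>J. lam i * (f c - hcut f c a (y i) (s i) c)) c"
proof -
  have "H c = f c" using model \<open>c \<in> C\<close> by (simp add: gprox_def)
  then show ?thesis
    using assms by (intro eps_subdiff_convex_combination) (metis cutting_plane_eps_subgradient)+
qed

theorem lemma2:
  fixes f :: "real ^ 'n \<Rightarrow> real"
    and xbar :: "real ^ 'n" and a Delta :: real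
    and I :: "'i set" and y s :: "'i \<Rightarrow> real ^ 'n"
    and ibar :: 'i
    and xs :: "real ^ 'n" and zs :: real
    and lam :: "'i \<Rightarrow> real" and mup mum :: "real ^ 'n"
  defines "h \<equiv> (\<lambda>i w. hcut f xbar a (y i) (s i) w)"
    and "m \<equiv> (\<lambda>w. Max ((\<lambda>i. hcut f xbar a (y i) (s i) w) ` I))"
    and "E \<equiv> (\<lambda>i. f xbar - hcut f xbar a (y i) (s i) xbar)"
    and "Ibar \<equiv> {i \<in> I. hcut f xbar a (y i) (s i) xs = zs}"
  assumes Delta_pos: "Delta > 0"
    and I_fin: "finite I"
    and subgrad: "\<forall>i\<in>I. s i \<in> limiting_subdiff f (y i)"
    and ibar: "ibar \<in> I" "y ibar = xbar"
    and E_nonneg: "\<forall>i\<in>I. E i \<ge> 0"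
    and opt: "lp_feasible I h xbar Delta xs zs"
             "\<forall>x z. lp_feasible I h xbar Delta x z \<longrightarrow> zs \<le> z"
    and kkt: "lp_kkt I h (\<lambda>i. s i + a *\<^sub>R (y i - xbar)) xbar Delta xs zs lam mup mum"
  shows "m xbar - m xs = f xbar - zs
       \<and> (infnorm (xs - xbar) < Delta \<longrightarrow> f xbar - zs = (\<Sum>i\<in>Ibar. lam i * E i))
       \<and> (infnorm (xs - xbar) = Delta \<longrightarrow>
            f xbar - zs = (\<Sum>i\<in>Ibar. lam i * E i)
              + Delta * norm1 (\<Sum>i\<in>Ibar. lam i *\<^sub>R (s i + a *\<^sub>R (y i - xbar))))
       \<and> (\<forall>(C :: (real ^ 'n) set) (H :: real ^ 'n \<Rightarrow> real ^ 'n \<Rightarrow> real).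
            xbar \<in> interior C \<and> (\<forall>i\<in>Ibar. y i \<in> interior C) \<and>
            (\<forall>x. convex_on UNIV (H x) \<and> (\<forall>u\<in>C. H x u = gprox f x a u)
                 \<and> (\<forall>u. gprox f x a u \<ge> H x u))
            \<longrightarrow> (\<Sum>i\<in>Ibar. lam i *\<^sub>R (s i + a *\<^sub>R (y i - xbar)))
                   \<in> eps_subdiff (H xbar) (\<Sum>i\<in>Ibar. lam i * E i) xbar
              \<and> (0 \<in> eps_subdiff (H xbar) 0 xbar \<longrightarrow> (\<forall>u. gprox f xbar a xbar \<le> gprox f xbar a u)))"
proof -
  define g where "g i = s i + a *\<^sub>R (y i - xbar)" for i
  have kkt: "lp_kkt I h g xbar Delta xs zs lam mup mum" using kkt by (simp add: g_def[abs_def])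
  have Ibar: "Ibar = {i\<in>I. h i xs = zs}" by (simp add: Ibar_def h_def)
  have affine: "h i w = h i xs + inner (g i) (w - xs)" for i w unfolding h_def g_def by (rule hcut_shift)
  have gap: "f xbar - zs = (\<Sum>i\<in>Ibar. lam i * E i) + Delta * norm1 (\<Sum>i\<in>Ibar. lam i *\<^sub>R g i)"
    using lp_kkt_value_gap[OF I_fin kkt affine] by (simp add: Ibar E_def h_def)
  have "m xbar = f xbar"
    unfolding m_def using I_fin E_nonneg ibar
    by (intro Max_eqI) (auto simp: E_def hcut_def intro!: image_eqI[of _ _ ibar])
  moreover have "m xs = zs"
    unfolding m_def using lp_optimal_value_eq_Max[OF I_fin _ opt] ibar by (auto simp: h_def)
  ultimately have model_decrease: "m xbar - m xs = f xbar - zs" by simp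
  have interior_case: "f xbar - zs = (\<Sum>i\<in>Ibar. lam i * E i)" if "infnorm (xs - xbar) < Delta"
  proof -
    have "(\<Sum>i\<in>Ibar. lam i *\<^sub>R g i) = 0"
      using lp_kkt_sum_active[OF I_fin kkt, of g] lp_kkt_gradient_sum[OF kkt]
        lp_kkt_box_interior[OF kkt that] by (simp add: Ibar)
    then show ?thesis using gap by (simp add: norm1_def)
  qed
  have eps_subgradient: "(\<Sum>i\<in>Ibar. lam i *\<^sub>R g i) \<in> eps_subdiff (H xbar) (\<Sum>i\<in>Ibar. lam i * E i) xbar
      \<and> (0 \<in> eps_subdiff (H xbar) 0 xbar \<longrightarrow> (\<forall>u. gprox f xbar a xbar \<le> gprox f xbar a u))"
    if C: "xbar \<in> interior C" "\<forall>i\<in>Ibar. y i \<in> interior C"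
      and H: "\<forall>x. convex_on UNIV (H x) \<and> (\<forall>u\<in>C. H x u = gprox f x a u) \<and> (\<forall>u. gprox f x a u \<ge> H x u)"
    for C H
  proof (intro conjI impI allI)
    have "xbar \<in> C" using C(1) interior_subset by blast
    then show "(\<Sum>i\<in>Ibar. lam i *\<^sub>R g i) \<in> eps_subdiff (H xbar) (\<Sum>i\<in>Ibar. lam i * E i) xbar"
      using H C subgrad I_fin lp_kkt_active_weights[OF I_fin kkt]
      unfolding g_def E_def Ibar by (intro aggregate_cut_eps_subgradient[of "H xbar" C]) (auto simp: h_def)
    fix u assume "0 \<in> eps_subdiff (H xbar) 0 xbar"
    then have "H xbar xbar \<le> H xbar u" by (simp add: eps_subdiff_def)
    then show "gprox f xbar a xbar \<le> gprox f xbar a u"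
      using H \<open>xbar \<in> C\<close> by (metis order_trans)
  qed
  show ?thesis
    unfolding g_def[symmetric] using model_decrease interior_case gap eps_subgradient by blast
qed

end
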